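(* There is a constant $c>0$ such that for every $n\ge 3$ and every initial coloring of the cycle $C_n$, the stabilization time of the Random Majority Model (RMM) on $C_n$ is at most $c n^2$; i.e., the stabilization time of RMM on $C_n$ is in $\mathcal{O}(n^2)$.
   Context: A coloring of a graph is a map from its nodes to $\{b,w\}$. In the Random Majority Model (RMM), all nodes update simultaneously in each round: a node adopts the color strictly more frequent among its neighbors in the previous round, and in case of a tie it chooses blue or white independently and uniformly at random. RMM is a Markov chain on colorings; in the directed graph on colorings with an edge $s\to s'$ whenever the transition has positive probability, an absorbing component is a maximal strongly connected component with no outgoing edge. The stabilization time is the expected number of rounds until the process reaches an absorbing component. *)

theory Defs
  imports "HOL-Probability.Probability"
begin

text \<open>Colors. A coloring of the cycle C_n (nodes 0,...,n-1, node i adjacent to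
  i-1 mod n and i+1 mod n) is a list of colors of length n.\<close>
datatype color = Blue | White

definition cyc_nbrs :: "nat \<Rightarrow> nat \<Rightarrow> nat set" where
  "cyc_nbrs n i = {(i + n - 1) mod n, (i + 1) mod n}"

definition node_dist :: "nat \<Rightarrow> color list \<Rightarrow> nat \<Rightarrow> color pmf" where
  "node_dist n s i =
    (let b = card {j \<in> cyc_nbrs n i. s ! j = Blue};
         w = card {j \<in> cyc_nbrs n i. s ! j = White}
     in if w < b then return_pmf Blue
        else if b < w then return_pmf White
        else pmf_of_set {Blue, White})"

definition rmm_step :: "nat \<Rightarrow> color list \<Rightarrow> color list pmf" where
  "rmm_step n s = map_pmf (\<lambda>f. map f [0..<n]) (Pi_pmf {0..<n} Blue (\<lambda>i. node_dist n s i))"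

definition rmm_edge :: "nat \<Rightarrow> color list \<Rightarrow> color list \<Rightarrow> bool" where
  "rmm_edge n s s' \<longleftrightarrow> length s = n \<and> pmf (rmm_step n s) s' > 0"

definition rmm_reach :: "nat \<Rightarrow> color list \<Rightarrow> color list \<Rightarrow> bool" where
  "rmm_reach n = (rmm_edge n)\<^sup>*\<^sup>*"

definition rmm_scc :: "nat \<Rightarrow> color list \<Rightarrow> color list set" where
  "rmm_scc n s = {s'. rmm_reach n s s' \<and> rmm_reach n s' s}"

definition absorbing_component :: "nat \<Rightarrow> color list set \<Rightarrow> bool" where
  "absorbing_component n C \<longleftrightarrow>
     (\<exists>s. length s = n \<and> C = rmm_scc n s) \<and> (\<forall>x\<in>C. \<forall>y. rmm_edge n x y \<longrightarrow> y \<in> C)"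

definition absorbed :: "nat \<Rightarrow> color list \<Rightarrow> bool" where
  "absorbed n s \<longleftrightarrow> (\<exists>C. absorbing_component n C \<and> s \<in> C)"

primrec rmm_traj :: "nat \<Rightarrow> color list \<Rightarrow> nat \<Rightarrow> color list list pmf" where
  "rmm_traj n s0 0 = return_pmf [s0]"
| "rmm_traj n s0 (Suc t) =
     bind_pmf (rmm_traj n s0 t) (\<lambda>xs. map_pmf (\<lambda>y. xs @ [y]) (rmm_step n (last xs)))"

text \<open>Stabilization time E[T], T = first round in an absorbing component,
  via E[T] = sum over t of P(T > t) = P(X_0,...,X_t all not absorbed).\<close>
definition stabilization_time :: "nat \<Rightarrow> color list \<Rightarrow> ennreal" where
  "stabilization_time n s0 =
     (\<Sum>t. ennreal (measure_pmf.prob (rmm_traj n s0 t) {xs. \<forall>x\<in>set xs. \<not> absorbed n x}))"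

end

theory Submission
  imports Defs
begin

text \<open>
  On the cycle a node copies its two neighbours when they agree and flips a fair coin otherwise.
  If every node sees agreeing neighbours, a round is the deterministic rotation by one place,
  which has period two, so such colourings lie in absorbing components.
  The number \<open>N\<close> of blue nodes is a martingale: the expected new colour of a node is the average
  of its neighbours' colours, and summing over the cycle counts every node twice.
  Its one-step variance is \<open>1/4\<close> times the number of nodes with disagreeing neighbours.
  Hence the potential \<open>4 N (n - N) \<in> [0, n\<^sup>2]\<close> drops in expectation by \<open>4 Var N \<ge> 1\<close> in every
  round before absorption, and telescoping this supermartingale bounds the expected
  absorption time by the initial potential, hence by \<open>n\<^sup>2\<close>.
\<close>

section \<open>Independent products of pmfs\<close>

lemma expectation_Pi_pmf_component:
  fixes g :: "'b \<Rightarrow> real"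
  assumes "finite A" "i \<in> A"
  shows "measure_pmf.expectation (Pi_pmf A d D) (\<lambda>f. g (f i)) = measure_pmf.expectation (D i) g"
proof -
  have "measure_pmf.expectation (Pi_pmf A d D) (\<lambda>f. g (f i)) =
      measure_pmf.expectation (map_pmf (\<lambda>f. f i) (Pi_pmf A d D)) g"
    by simp
  also have "map_pmf (\<lambda>f. f i) (Pi_pmf A d D) = D i"
    using assms by (simp add: Pi_pmf_component)
  finally show ?thesis .
qed

lemma integrable_Pi_pmf_component_iff:
  fixes g :: "'b \<Rightarrow> real"
  assumes "finite A" "i \<in> A"
  shows "integrable (Pi_pmf A d D) (\<lambda>f. g (f i)) \<longleftrightarrow> integrable (D i) g"
proof -
  have "integrable (Pi_pmf A d D) (\<lambda>f. g (f i)) \<longleftrightarrow>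
      integrable (map_pmf (\<lambda>f. f i) (Pi_pmf A d D)) g"
    by simp
  also have "map_pmf (\<lambda>f. f i) (Pi_pmf A d D) = D i"
    using assms by (simp add: Pi_pmf_component)
  finally show ?thesis .
qed

lemma expectation_Pi_pmf_mult_components:
  fixes g h :: "'b \<Rightarrow> real"
  assumes "finite A" "i \<in> A" "j \<in> A" "i \<noteq> j"
    and "integrable (measure_pmf (D i)) g" "integrable (measure_pmf (D j)) h"
  shows "measure_pmf.expectation (Pi_pmf A d D) (\<lambda>f. g (f i) * h (f j)) =
    measure_pmf.expectation (D i) g * measure_pmf.expectation (D j) h"
proof -
  let ?P = "Pi_pmf A d D"
  define X where "X = (\<lambda>k f. if k = i then g (f k) else h (f k))"
  \<comment> \<open>The interpretation \<open>measure_pmf\<close> does not carry the lemmas of Independent_Family,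
    so they are instantiated with \<open>measure_pmf.prob_space_axioms\<close> by hand.\<close>
  have "prob_space.indep_vars ?P (\<lambda>_. borel) X {i, j}"
  proof -
    have "prob_space.indep_vars ?P (\<lambda>_. count_space UNIV) (\<lambda>k f. f k) {i, j}"
      by (rule prob_space.indep_vars_subset[OF measure_pmf.prob_space_axioms
            indep_vars_Pi_pmf[OF assms(1)]])
         (use assms(2,3) in simp)
    then show ?thesis
      unfolding X_def
      by (rule prob_space.indep_vars_compose2[OF measure_pmf.prob_space_axioms,
            where Y = "\<lambda>k x. if k = i then g x else h x"]) simp
  qed
  moreover have "integrable ?P (X k)" if "k \<in> {i, j}" for k
    using that assms(1-4) by (auto simp: X_def integrable_Pi_pmf_component_iff assms(5,6))
  ultimately have "measure_pmf.expectation ?P (\<lambda>f. \<Prod>k\<in>{i, j}. X k f) =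
      (\<Prod>k\<in>{i, j}. measure_pmf.expectation ?P (X k))"
    by (intro prob_space.indep_vars_lebesgue_integral[OF measure_pmf.prob_space_axioms]) simp_all
  then show ?thesis
    using assms(1-4) by (simp add: X_def expectation_Pi_pmf_component)
qed

lemma sum_sum_diag_eq:
  fixes p q :: "'a \<Rightarrow> real"
  assumes "finite A"
  shows "(\<Sum>i\<in>A. \<Sum>j\<in>A. if i = j then q i else p i * p j) = (\<Sum>i\<in>A. p i)\<^sup>2 + (\<Sum>i\<in>A. q i - (p i)\<^sup>2)"
proof -
  have "(\<Sum>i\<in>A. \<Sum>j\<in>A. if i = j then q i else p i * p j) =
      (\<Sum>i\<in>A. \<Sum>j\<in>A. p i * p j + (if i = j then q i - (p i)\<^sup>2 else 0))"
    by (intro sum.cong) (auto simp: power2_eq_square)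
  also have "\<dots> = (\<Sum>i\<in>A. p i)\<^sup>2 + (\<Sum>i\<in>A. q i - (p i)\<^sup>2)"
    using assms by (simp add: sum.distrib power2_eq_square sum_product)
  finally show ?thesis .
qed

lemma variance_Pi_pmf_sum:
  fixes g :: "'b \<Rightarrow> real"
  assumes A: "finite A" and bounded: "\<And>x. \<bar>g x\<bar> \<le> B"
  shows "measure_pmf.variance (Pi_pmf A d D) (\<lambda>f. \<Sum>i\<in>A. g (f i)) =
    (\<Sum>i\<in>A. measure_pmf.variance (D i) g)"
proof -
  let ?P = "Pi_pmf A d D"
  define p where "p i = measure_pmf.expectation (D i) g" for i
  define q where "q i = measure_pmf.expectation (D i) (\<lambda>x. (g x)\<^sup>2)" for i
  have int: "integrable (measure_pmf M) h" if "\<And>x. \<bar>h x\<bar> \<le> C" for M and h :: "'c \<Rightarrow> real" and C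
    using that by (intro measure_pmf.integrable_const_bound[where B = C]) auto
  have bounded_sq: "\<bar>g x * g y\<bar> \<le> B * B" for x y
    using bounded by (simp add: abs_mult mult_mono')
  have int_g: "integrable (measure_pmf M) g" "integrable (measure_pmf M) (\<lambda>x. (g x)\<^sup>2)" for M
    using bounded bounded_sq by (auto intro: int simp: power2_eq_square)
  have int_prod: "integrable (measure_pmf M) (\<lambda>f. g (f i) * g (f j))" for M i j
    using bounded_sq by (rule int)
  have mean: "measure_pmf.expectation ?P (\<lambda>f. \<Sum>i\<in>A. g (f i)) = (\<Sum>i\<in>A. p i)"
    using A int_g by (simp add: p_def expectation_Pi_pmf_component integrable_Pi_pmf_component_iff)
  have "measure_pmf.expectation ?P (\<lambda>f. (\<Sum>i\<in>A. g (f i))\<^sup>2) =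
      (\<Sum>i\<in>A. \<Sum>j\<in>A. measure_pmf.expectation ?P (\<lambda>f. g (f i) * g (f j)))"
    by (simp add: power2_eq_square sum_product Bochner_Integration.integral_sum integrable_sum int_prod)
  also have "\<dots> = (\<Sum>i\<in>A. \<Sum>j\<in>A. if i = j then q i else p i * p j)"
    using A int_g
    by (intro sum.cong refl)
       (simp_all add: p_def q_def expectation_Pi_pmf_mult_components
         expectation_Pi_pmf_component[where g = "\<lambda>x. g x * g x"] power2_eq_square)
  finally have mean_sq: "measure_pmf.expectation ?P (\<lambda>f. (\<Sum>i\<in>A. g (f i))\<^sup>2) =
      (\<Sum>i\<in>A. p i)\<^sup>2 + (\<Sum>i\<in>A. q i - (p i)\<^sup>2)"
    using A by (simp add: sum_sum_diag_eq)
  have "integrable ?P (\<lambda>f. \<Sum>i\<in>A. g (f i))" "integrable ?P (\<lambda>f. (\<Sum>i\<in>A. g (f i))\<^sup>2)"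
    using A int_g by (simp_all add: integrable_Pi_pmf_component_iff power2_eq_square sum_product
        integrable_sum int_prod)
  then have "measure_pmf.variance ?P (\<lambda>f. \<Sum>i\<in>A. g (f i)) =
      measure_pmf.expectation ?P (\<lambda>f. (\<Sum>i\<in>A. g (f i))\<^sup>2) -
      (measure_pmf.expectation ?P (\<lambda>f. \<Sum>i\<in>A. g (f i)))\<^sup>2"
    by (rule measure_pmf.variance_eq)
  also have "\<dots> = (\<Sum>i\<in>A. q i - (p i)\<^sup>2)"
    by (simp add: mean mean_sq)
  also have "\<dots> = (\<Sum>i\<in>A. measure_pmf.variance (D i) g)"
    using int_g by (simp add: measure_pmf.variance_eq p_def q_def)
  finally show ?thesis .
qed

lemma (in prob_space) expectation_mult_const_diff:
  fixes N :: "'a \<Rightarrow> real"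
  assumes "integrable M N" "integrable M (\<lambda>x. (N x)\<^sup>2)"
  shows "expectation (\<lambda>x. N x * (c - N x)) = expectation N * (c - expectation N) - variance N"
proof -
  have "expectation (\<lambda>x. N x * (c - N x)) = c * expectation N - expectation (\<lambda>x. (N x)\<^sup>2)"
    using assms by (simp add: right_diff_distrib power2_eq_square mult.commute)
  then show ?thesis
    using assms by (simp add: variance_eq prob_space algebra_simps power2_eq_square)
qed

section \<open>Indexing the cycle\<close>

definition cyc_pred :: "nat \<Rightarrow> nat \<Rightarrow> nat" where
  "cyc_pred n i = (i + n - 1) mod n"

definition cyc_succ :: "nat \<Rightarrow> nat \<Rightarrow> nat" where
  "cyc_succ n i = (i + 1) mod n"

lemma cyc_nbrs_eq: "cyc_nbrs n i = {cyc_pred n i, cyc_succ n i}"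
  by (simp add: cyc_nbrs_def cyc_pred_def cyc_succ_def)

lemma cyc_succ_eq: "i < n \<Longrightarrow> cyc_succ n i = (if i + 1 = n then 0 else i + 1)"
  by (simp add: cyc_succ_def)

lemma cyc_pred_eq: "i < n \<Longrightarrow> cyc_pred n i = (if i = 0 then n - 1 else i - 1)"
  unfolding cyc_pred_def
proof (cases "i = 0")
  case False
  moreover assume "i < n"
  ultimately show "(i + n - 1) mod n = (if i = 0 then n - 1 else i - 1)"
    by (metis Suc_pred' add.commute add_Suc_right add_diff_cancel_left' less_imp_diff_less
        mod_add_self1 mod_less plus_1_eq_Suc bot_nat_0.not_eq_extremum)
qed simp

lemma cyc_succ_less: "i < n \<Longrightarrow> cyc_succ n i < n"
  by (simp add: cyc_succ_def)

lemma cyc_pred_less: "i < n \<Longrightarrow> cyc_pred n i < n"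
  by (simp add: cyc_pred_def)

lemma cyc_pred_succ: "i < n \<Longrightarrow> cyc_pred n (cyc_succ n i) = i"
  by (auto simp: cyc_succ_eq cyc_pred_eq)

lemma cyc_succ_pred: "i < n \<Longrightarrow> cyc_succ n (cyc_pred n i) = i"
  by (auto simp: cyc_succ_eq cyc_pred_eq)

lemma cyc_pred_neq_succ: "3 \<le> n \<Longrightarrow> i < n \<Longrightarrow> cyc_pred n i \<noteq> cyc_succ n i"
  by (auto simp: cyc_succ_eq cyc_pred_eq)

lemma bij_betw_cyc_succ: "bij_betw (cyc_succ n) {..<n} {..<n}"
  by (rule bij_betw_byWitness[where f' = "cyc_pred n"])
     (auto simp: cyc_pred_succ cyc_succ_pred, auto simp: cyc_succ_def cyc_pred_def)

lemma bij_betw_cyc_pred: "bij_betw (cyc_pred n) {..<n} {..<n}"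
  by (rule bij_betw_byWitness[where f' = "cyc_succ n"])
     (auto simp: cyc_pred_succ cyc_succ_pred, auto simp: cyc_succ_def cyc_pred_def)

lemma sum_cyc_succ: "(\<Sum>i<n. g (cyc_succ n i)) = (\<Sum>i<n. g i)"
  by (rule sum.reindex_bij_betw[OF bij_betw_cyc_succ])

lemma sum_cyc_pred: "(\<Sum>i<n. g (cyc_pred n i)) = (\<Sum>i<n. g i)"
  by (rule sum.reindex_bij_betw[OF bij_betw_cyc_pred])

lemma nth_rotate1_cyc_succ: "length s = n \<Longrightarrow> i < n \<Longrightarrow> rotate1 s ! i = s ! cyc_succ n i"
  by (simp add: nth_rotate1 cyc_succ_def)

lemma node_dist_cycle:
  assumes "3 \<le> n" "i < n"
  shows "node_dist n s i =
    (if s ! cyc_pred n i = s ! cyc_succ n i then return_pmf (s ! cyc_succ n i)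
     else pmf_of_set {Blue, White})"
proof -
  have card_eq: "card {j \<in> cyc_nbrs n i. s ! j = x} =
      of_bool (s ! cyc_pred n i = x) + of_bool (s ! cyc_succ n i = x)" for x
  proof -
    have "{j \<in> cyc_nbrs n i. s ! j = x} =
        (if s ! cyc_pred n i = x then {cyc_pred n i} else {}) \<union>
        (if s ! cyc_succ n i = x then {cyc_succ n i} else {})"
      by (auto simp: cyc_nbrs_eq)
    then show ?thesis
      using cyc_pred_neq_succ[OF assms] by simp
  qed
  show ?thesis
    by (cases "s ! cyc_pred n i"; cases "s ! cyc_succ n i")
       (simp_all add: node_dist_def card_eq insert_commute)
qed

section \<open>Colourings in which all neighbours agree\<close>

definition neighbours_agree :: "nat \<Rightarrow> color list \<Rightarrow> bool" where
  "neighbours_agree n s \<longleftrightarrow> length s = n \<and> (\<forall>i<n. s ! cyc_pred n i = s ! cyc_succ n i)"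

lemma rmm_step_neighbours_agree:
  assumes "3 \<le> n" "neighbours_agree n s"
  shows "rmm_step n s = return_pmf (rotate1 s)"
proof -
  have "Pi_pmf {0..<n} Blue (node_dist n s) = Pi_pmf {0..<n} Blue (\<lambda>i. return_pmf (s ! cyc_succ n i))"
    using assms by (intro Pi_pmf_cong) (auto simp: node_dist_cycle neighbours_agree_def)
  then have "rmm_step n s = return_pmf (map (\<lambda>i. s ! cyc_succ n i) [0..<n])"
    by (simp add: rmm_step_def)
  also have "map (\<lambda>i. s ! cyc_succ n i) [0..<n] = rotate1 s"
    using assms(2) by (intro nth_equalityI) (auto simp: nth_rotate1_cyc_succ neighbours_agree_def)
  finally show ?thesis .
qed

lemma rmm_edge_neighbours_agree:
  "3 \<le> n \<Longrightarrow> neighbours_agree n s \<Longrightarrow> rmm_edge n s y \<longleftrightarrow> y = rotate1 s"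
  by (auto simp: rmm_edge_def rmm_step_neighbours_agree neighbours_agree_def indicator_def)

lemma neighbours_agree_period_two:
  assumes "neighbours_agree n s" "i < n"
  shows "s ! cyc_succ n (cyc_succ n i) = s ! i"
proof -
  have "s ! cyc_pred n (cyc_succ n i) = s ! cyc_succ n (cyc_succ n i)"
    using assms cyc_succ_less unfolding neighbours_agree_def by blast
  then show ?thesis
    using cyc_pred_succ[OF assms(2)] by simp
qed

lemma neighbours_agree_rotate1:
  assumes "neighbours_agree n s"
  shows "neighbours_agree n (rotate1 s)" and "rotate1 (rotate1 s) = s"
proof -
  have len: "length s = n"
    using assms by (simp add: neighbours_agree_def)
  have "rotate1 s ! cyc_pred n i = s ! i" "rotate1 s ! cyc_succ n i = s ! i" if "i < n" for i
    using that len neighbours_agree_period_two[OF assms that]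
    by (simp_all add: nth_rotate1_cyc_succ cyc_pred_less cyc_succ_less cyc_succ_pred)
  then show "neighbours_agree n (rotate1 s)"
    using len by (simp add: neighbours_agree_def)
  show "rotate1 (rotate1 s) = s"
    using len neighbours_agree_period_two[OF assms]
    by (intro nth_equalityI) (simp_all add: nth_rotate1_cyc_succ cyc_succ_less)
qed

lemma absorbed_if_edges_alternate:
  assumes "length s = n"
    and "\<And>y. rmm_edge n s y \<longleftrightarrow> y = t" and "\<And>y. rmm_edge n t y \<longleftrightarrow> y = s"
  shows "absorbed n s"
proof -
  have closed: "y \<in> {s, t}" if "x \<in> {s, t}" "rmm_edge n x y" for x y
    using that assms(2,3) by auto
  have "x \<in> {s, t}" if "rmm_reach n s x" for x
    using that unfolding rmm_reach_def by induction (use closed in auto)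
  moreover have "rmm_reach n s t" "rmm_reach n t s"
    using assms(2,3) by (auto simp: rmm_reach_def)
  ultimately have "rmm_scc n s = {s, t}"
    by (auto simp: rmm_scc_def rmm_reach_def)
  then have "absorbing_component n {s, t}"
    using assms(1) closed unfolding absorbing_component_def by blast
  then show ?thesis
    unfolding absorbed_def by blast
qed

lemma absorbed_if_neighbours_agree:
  assumes "3 \<le> n" "neighbours_agree n s"
  shows "absorbed n s"
  using assms neighbours_agree_rotate1[OF assms(2)]
  by (intro absorbed_if_edges_alternate[where t = "rotate1 s"])
     (auto simp: rmm_edge_neighbours_agree neighbours_agree_def)

section \<open>The potential\<close>

definition blue_ind :: "color \<Rightarrow> real" where
  "blue_ind c = (if c = Blue then 1 else 0)"

definition num_blue :: "nat \<Rightarrow> color list \<Rightarrow> real" where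
  "num_blue n s = (\<Sum>i<n. blue_ind (s ! i))"

definition potential :: "nat \<Rightarrow> color list \<Rightarrow> real" where
  "potential n s = 4 * num_blue n s * (real n - num_blue n s)"

lemma integrable_blue_ind: "integrable (measure_pmf M) (\<lambda>x. blue_ind (f x))"
  by (rule measure_pmf.integrable_const_bound[where B = 1]) (simp_all add: blue_ind_def)

lemma num_blue_bounds: "0 \<le> num_blue n s" "num_blue n s \<le> real n"
proof -
  show "0 \<le> num_blue n s"
    unfolding num_blue_def by (intro sum_nonneg) (simp add: blue_ind_def)
  have "num_blue n s \<le> (\<Sum>i<n. 1)"
    unfolding num_blue_def by (intro sum_mono) (simp add: blue_ind_def)
  then show "num_blue n s \<le> real n"
    by simp
qed

lemma potential_nonneg: "0 \<le> potential n s"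
  using num_blue_bounds[of n s] by (simp add: potential_def)

lemma potential_le: "potential n s \<le> (real n)\<^sup>2"
proof -
  have "potential n s = (real n)\<^sup>2 - (real n - 2 * num_blue n s)\<^sup>2"
    by (simp add: potential_def power2_eq_square algebra_simps)
  then show ?thesis
    by simp
qed

lemma num_blue_map_upt: "num_blue n (map f [0..<n]) = (\<Sum>i<n. blue_ind (f i))"
  by (simp add: num_blue_def)

lemma expectation_node_dist_blue_ind:
  assumes "3 \<le> n" "i < n"
  shows "measure_pmf.expectation (node_dist n s i) blue_ind =
    (blue_ind (s ! cyc_pred n i) + blue_ind (s ! cyc_succ n i)) / 2"
  by (cases "s ! cyc_pred n i"; cases "s ! cyc_succ n i")
     (simp_all add: node_dist_cycle[OF assms] blue_ind_def integral_pmf_of_set)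

lemma variance_node_dist_blue_ind:
  assumes "3 \<le> n" "i < n"
  shows "measure_pmf.variance (node_dist n s i) blue_ind =
    (if s ! cyc_pred n i = s ! cyc_succ n i then 0 else 1 / 4)"
  by (cases "s ! cyc_pred n i"; cases "s ! cyc_succ n i")
     (simp_all add: node_dist_cycle[OF assms] blue_ind_def integral_pmf_of_set power2_eq_square)

lemma expectation_rmm_step_num_blue:
  assumes "3 \<le> n"
  shows "measure_pmf.expectation (rmm_step n s) (num_blue n) = num_blue n s"
proof -
  have "measure_pmf.expectation (rmm_step n s) (num_blue n) =
      (\<Sum>i<n. measure_pmf.expectation (node_dist n s i) blue_ind)"
    by (simp add: rmm_step_def num_blue_map_upt atLeast0LessThan Bochner_Integration.integral_sum
        integrable_blue_ind expectation_Pi_pmf_component)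
  also have "\<dots> = ((\<Sum>i<n. blue_ind (s ! cyc_pred n i)) + (\<Sum>i<n. blue_ind (s ! cyc_succ n i))) / 2"
    using assms by (simp add: expectation_node_dist_blue_ind add_divide_distrib sum.distrib
        sum_divide_distrib)
  also have "\<dots> = num_blue n s"
    using sum_cyc_pred[of "\<lambda>j. blue_ind (s ! j)"] sum_cyc_succ[of "\<lambda>j. blue_ind (s ! j)"]
    by (simp add: num_blue_def)
  finally show ?thesis .
qed

lemma variance_rmm_step_num_blue:
  assumes "3 \<le> n"
  shows "measure_pmf.variance (rmm_step n s) (num_blue n) =
    (\<Sum>i<n. if s ! cyc_pred n i = s ! cyc_succ n i then 0 else 1 / 4)"
proof -
  have "measure_pmf.variance (rmm_step n s) (num_blue n) =
      measure_pmf.variance (Pi_pmf {..<n} Blue (node_dist n s)) (\<lambda>f. \<Sum>i<n. blue_ind (f i))"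
    by (simp add: rmm_step_def num_blue_map_upt atLeast0LessThan)
  also have "\<dots> = (\<Sum>i<n. measure_pmf.variance (node_dist n s i) blue_ind)"
    by (rule variance_Pi_pmf_sum[where B = 1]) (simp_all add: blue_ind_def)
  finally show ?thesis
    using assms by (simp add: variance_node_dist_blue_ind)
qed

lemma integrable_num_blue: "integrable (measure_pmf M) (num_blue n)"
  using num_blue_bounds by (intro measure_pmf.integrable_const_bound[where B = "real n"]) auto

lemma integrable_num_blue_sq: "integrable (measure_pmf M) (\<lambda>y. (num_blue n y)\<^sup>2)"
  using num_blue_bounds
  by (intro measure_pmf.integrable_const_bound[where B = "(real n)\<^sup>2"]) (auto intro: power_mono)

lemma integrable_potential: "integrable (measure_pmf M) (potential n)"
  using potential_nonneg potential_le
  by (intro measure_pmf.integrable_const_bound[where B = "(real n)\<^sup>2"]) auto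

lemma expectation_rmm_step_potential:
  assumes "3 \<le> n"
  shows "measure_pmf.expectation (rmm_step n s) (potential n) =
    potential n s - 4 * measure_pmf.variance (rmm_step n s) (num_blue n)"
proof -
  have "measure_pmf.expectation (rmm_step n s) (potential n) =
      4 * measure_pmf.expectation (rmm_step n s) (\<lambda>y. num_blue n y * (real n - num_blue n y))"
    by (simp add: potential_def[abs_def] mult.assoc)
  also have "\<dots> = 4 * (num_blue n s * (real n - num_blue n s) -
      measure_pmf.variance (rmm_step n s) (num_blue n))"
    using assms
    by (simp add: measure_pmf.expectation_mult_const_diff integrable_num_blue integrable_num_blue_sq
        expectation_rmm_step_num_blue)
  finally show ?thesis
    by (simp add: potential_def algebra_simps)
qed

lemma expectation_rmm_step_potential_le:
  assumes "3 \<le> n" "length s = n" "\<not> neighbours_agree n s"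
  shows "measure_pmf.expectation (rmm_step n s) (potential n) + 1 \<le> potential n s"
proof -
  obtain i where i: "i < n" "s ! cyc_pred n i \<noteq> s ! cyc_succ n i"
    using assms(2,3) by (auto simp: neighbours_agree_def)
  let ?w = "\<lambda>j. if s ! cyc_pred n j = s ! cyc_succ n j then 0 else 1 / 4 :: real"
  have "1 / 4 = ?w i"
    using i by simp
  also have "\<dots> \<le> (\<Sum>j<n. ?w j)"
    using i(1) by (intro member_le_sum) auto
  finally show ?thesis
    using assms(1) by (simp add: expectation_rmm_step_potential variance_rmm_step_num_blue)
qed

lemma nn_integral_rmm_step_potential_le:
  assumes "3 \<le> n" "length s = n" "\<not> absorbed n s"
  shows "(\<integral>\<^sup>+y. ennreal (potential n y) \<partial>rmm_step n s) + 1 \<le> ennreal (potential n s)"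
proof -
  have "(\<integral>\<^sup>+y. ennreal (potential n y) \<partial>rmm_step n s) + 1 =
      ennreal (measure_pmf.expectation (rmm_step n s) (potential n) + 1)"
    by (simp add: nn_integral_eq_integral integrable_potential potential_nonneg ennreal_plus)
  also have "\<dots> \<le> ennreal (potential n s)"
    using assms absorbed_if_neighbours_agree expectation_rmm_step_potential_le
    by (intro ennreal_leI) blast
  finally show ?thesis .
qed

section \<open>Expected hitting time under a drift condition\<close>

lemma rmm_traj_last:
  assumes "length s0 = n" "xs \<in> set_pmf (rmm_traj n s0 t)"
  shows "xs \<noteq> [] \<and> length (last xs) = n"
  using assms(2) by (induction t arbitrary: xs) (auto simp: assms(1) rmm_step_def)

lemma nn_integral_rmm_traj_avoiding_Suc:
  fixes V :: "color list \<Rightarrow> ennreal"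
  assumes "length s0 = n"
    and drift: "\<And>s. length s = n \<Longrightarrow> \<not> Q s \<Longrightarrow> (\<integral>\<^sup>+y. V y \<partial>rmm_step n s) + 1 \<le> V s"
  defines "avoid \<equiv> {xs. \<forall>x\<in>set xs. \<not> Q x}"
  shows "(\<integral>\<^sup>+xs. V (last xs) * indicator avoid xs \<partial>rmm_traj n s0 (Suc t)) +
      emeasure (rmm_traj n s0 t) avoid \<le> (\<integral>\<^sup>+xs. V (last xs) * indicator avoid xs \<partial>rmm_traj n s0 t)"
proof -
  let ?M = "rmm_traj n s0 t"
  let ?I = "\<lambda>xs. indicator avoid xs :: ennreal"
  let ?E = "\<lambda>xs. \<integral>\<^sup>+y. V y \<partial>rmm_step n (last xs)"
  have "(\<integral>\<^sup>+xs. V (last xs) * ?I xs \<partial>rmm_traj n s0 (Suc t)) =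
      (\<integral>\<^sup>+xs. \<integral>\<^sup>+y. V y * ?I (xs @ [y]) \<partial>rmm_step n (last xs) \<partial>?M)"
    by simp
  also have "\<dots> \<le> (\<integral>\<^sup>+xs. \<integral>\<^sup>+y. ?I xs * V y \<partial>rmm_step n (last xs) \<partial>?M)"
    by (intro nn_integral_mono) (auto simp: avoid_def indicator_def)
  also have "\<dots> = (\<integral>\<^sup>+xs. ?I xs * ?E xs \<partial>?M)"
    by (intro nn_integral_cong nn_integral_cmult) simp
  finally have "(\<integral>\<^sup>+xs. V (last xs) * ?I xs \<partial>rmm_traj n s0 (Suc t)) + emeasure ?M avoid \<le>
      (\<integral>\<^sup>+xs. ?I xs * ?E xs \<partial>?M) + (\<integral>\<^sup>+xs. ?I xs \<partial>?M)"
    by (simp add: add_right_mono)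
  also have "\<dots> = (\<integral>\<^sup>+xs. ?I xs * (?E xs + 1) \<partial>?M)"
    by (simp add: nn_integral_add distrib_left)
  also have "\<dots> \<le> (\<integral>\<^sup>+xs. V (last xs) * ?I xs \<partial>?M)"
  proof (intro nn_integral_mono_AE AE_pmfI)
    fix xs assume "xs \<in> set_pmf ?M"
    then have "xs \<noteq> []" "length (last xs) = n"
      using rmm_traj_last[OF assms(1)] by auto
    then show "?I xs * (?E xs + 1) \<le> V (last xs) * ?I xs"
      using drift by (auto simp: avoid_def indicator_def)
  qed
  finally show ?thesis .
qed

lemma sum_emeasure_rmm_traj_avoiding_le:
  fixes V :: "color list \<Rightarrow> ennreal"
  assumes "length s0 = n"
    and drift: "\<And>s. length s = n \<Longrightarrow> \<not> Q s \<Longrightarrow> (\<integral>\<^sup>+y. V y \<partial>rmm_step n s) + 1 \<le> V s"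
  shows "(\<Sum>t<T. emeasure (rmm_traj n s0 t) {xs. \<forall>x\<in>set xs. \<not> Q x}) \<le> V s0"
proof -
  define avoid where "avoid = {xs. \<forall>x\<in>set xs. \<not> Q x}"
  define G where "G t = (\<integral>\<^sup>+xs. V (last xs) * indicator avoid xs \<partial>rmm_traj n s0 t)" for t
  have "(\<Sum>t<T. emeasure (rmm_traj n s0 t) avoid) \<le> G T + (\<Sum>t<T. emeasure (rmm_traj n s0 t) avoid)"
    by (rule add_increasing) simp_all
  also have "\<dots> \<le> G 0"
  proof (induction T)
    case (Suc T)
    have "G (Suc T) + (\<Sum>t<Suc T. emeasure (rmm_traj n s0 t) avoid) =
        (G (Suc T) + emeasure (rmm_traj n s0 T) avoid) + (\<Sum>t<T. emeasure (rmm_traj n s0 t) avoid)"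
      by (simp add: add.assoc)
    also have "\<dots> \<le> G T + (\<Sum>t<T. emeasure (rmm_traj n s0 t) avoid)"
      unfolding G_def avoid_def by (intro add_right_mono nn_integral_rmm_traj_avoiding_Suc[OF assms])
    finally show ?case
      using Suc.IH by (rule order_trans)
  qed simp
  also have "G 0 \<le> V s0"
    by (simp add: G_def indicator_def)
  finally show ?thesis
    unfolding avoid_def .
qed

lemma stabilization_time_le_potential:
  fixes V :: "color list \<Rightarrow> ennreal"
  assumes "length s0 = n"
    and "\<And>s. length s = n \<Longrightarrow> \<not> absorbed n s \<Longrightarrow> (\<integral>\<^sup>+y. V y \<partial>rmm_step n s) + 1 \<le> V s"
  shows "stabilization_time n s0 \<le> V s0"
  unfolding stabilization_time_def suminf_eq_SUP
  using sum_emeasure_rmm_traj_avoiding_le[OF assms]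
  by (intro SUP_least) (simp add: measure_pmf.emeasure_eq_measure)

theorem theorem2p5:
  shows "\<exists>c::real. c > 0 \<and> (\<forall>n::nat. n \<ge> 3 \<longrightarrow>
           (\<forall>s0::color list. length s0 = n \<longrightarrow>
              stabilization_time n s0 \<le> ennreal (c * real n ^ 2)))"
proof (intro exI[of _ 1] conjI allI impI)
  fix n :: nat and s0 :: "color list"
  assume "n \<ge> 3" and "length s0 = n"
  then have "stabilization_time n s0 \<le> ennreal (potential n s0)"
    using nn_integral_rmm_step_potential_le by (intro stabilization_time_le_potential) simp_all
  also have "\<dots> \<le> ennreal (1 * real n ^ 2)"
    by (intro ennreal_leI) (simp add: potential_le)
  finally show "stabilization_time n s0 \<le> ennreal (1 * real n ^ 2)" .
qed simp

end
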